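(* Let $k\ge1$ and let $A_k$ be a $k$-atom with $n$ vertices. Then \[ \lambda_1(A_k) \geq \frac{k\sqrt{k}}{4\sqrt{n}} - 2. \]
   Context: $\lambda_1(H)$ denotes the largest eigenvalue of the adjacency matrix of a graph $H$. $k$-atoms are defined recursively: $K_1$ is the only $1$-atom. A graph $H$ is a $(k+1)$-atom if its vertices can be partitioned into an independent set $I$ and a set inducing a $k$-atom $A_k$ such that each vertex of $A_k$ has exactly one neighbor in $I$ and each vertex of $I$ has at least one neighbor in $A_k$. *)

theory Defs
  imports Complex_Main
begin

definition simple_graph :: "'a set \<Rightarrow> ('a \<Rightarrow> 'a \<Rightarrow> bool) \<Rightarrow> bool" where
  "simple_graph V E \<longleftrightarrow> finite V \<and> (\<forall>u w. E u w \<longrightarrow> u \<in> V \<and> w \<in> V)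
     \<and> (\<forall>u w. E u w \<longrightarrow> E w u) \<and> (\<forall>u. \<not> E u u)"

definition induced :: "('a \<Rightarrow> 'a \<Rightarrow> bool) \<Rightarrow> 'a set \<Rightarrow> 'a \<Rightarrow> 'a \<Rightarrow> bool" where
  "induced E B = (\<lambda>u w. E u w \<and> u \<in> B \<and> w \<in> B)"

text \<open>Eigenvalues of the adjacency matrix (A x)(v) = sum over neighbours u of v of x(u),
vectors indexed by V. The adjacency matrix is real symmetric, so all its
eigenvalues are real and have real eigenvectors.\<close>
definition adj_eigenvalue :: "'a set \<Rightarrow> ('a \<Rightarrow> 'a \<Rightarrow> bool) \<Rightarrow> real \<Rightarrow> bool" where
  "adj_eigenvalue V E \<mu> \<longleftrightarrow> (\<exists>x :: 'a \<Rightarrow> real. (\<exists>v\<in>V. x v \<noteq> 0) \<and>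
      (\<forall>v\<in>V. (\<Sum>u\<in>{u\<in>V. E v u}. x u) = \<mu> * x v))"

definition lambda1 :: "'a set \<Rightarrow> ('a \<Rightarrow> 'a \<Rightarrow> bool) \<Rightarrow> real" where
  "lambda1 V E = Max {\<mu>. adj_eigenvalue V E \<mu>}"

inductive atom :: "nat \<Rightarrow> 'a set \<Rightarrow> ('a \<Rightarrow> 'a \<Rightarrow> bool) \<Rightarrow> bool" where
  K1: "\<not> E v v \<Longrightarrow> atom 1 {v} E"
| step: "\<lbrakk> I \<inter> B = {}; I \<union> B = V;
           \<forall>u\<in>I. \<forall>w\<in>I. \<not> E u w;
           atom k B (induced E B);
           \<forall>b\<in>B. card {i\<in>I. E b i} = 1;
           \<forall>i\<in>I. \<exists>b\<in>B. E i b \<rbrakk> \<Longrightarrow> atom (Suc k) V E"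

end

theory Submission
  imports Defs "HOL-Analysis.Analysis"
begin

text \<open>
  A k-atom contains, for every 1 \<le> m \<le> k, a set X of at least m vertices each of which has
  at least k - m neighbours outside X: passing from the smaller atom to the whole graph, every
  vertex of the smaller atom gains exactly one neighbour in the new independent set, and X = V
  serves for m = k. By the Rayleigh principle lambda1 bounds y\<cdot>Ay / y\<cdot>y; the test vector
  equal to sqrt |V - X| on X and to sqrt |X| on V - X gives
  lambda1 \<ge> (k - m) sqrt (|X| / |V - X|) \<ge> (k - m) sqrt (m / n), and m = \<lfloor>k/2\<rfloor> yields
  k sqrt k / (4 sqrt n). The slack -2 is only needed for k = 1, where lambda1 \<ge> 0 suffices.
\<close>

section \<open>Quadratic forms on functions over a finite vertex set\<close>

definition inner_on :: "'a set \<Rightarrow> ('a \<Rightarrow> real) \<Rightarrow> ('a \<Rightarrow> real) \<Rightarrow> real" where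
  "inner_on V x y = (\<Sum>v\<in>V. x v * y v)"

definition adj_mult :: "'a set \<Rightarrow> ('a \<Rightarrow> 'a \<Rightarrow> bool) \<Rightarrow> ('a \<Rightarrow> real) \<Rightarrow> 'a \<Rightarrow> real" where
  "adj_mult V E x v = (\<Sum>u\<in>{u\<in>V. E v u}. x u)"

definition adj_form :: "'a set \<Rightarrow> ('a \<Rightarrow> 'a \<Rightarrow> bool) \<Rightarrow> ('a \<Rightarrow> real) \<Rightarrow> ('a \<Rightarrow> real) \<Rightarrow> real" where
  "adj_form V E x y = inner_on V x (adj_mult V E y)"

lemma adj_eigenvalue_iff:
  "adj_eigenvalue V E \<mu> \<longleftrightarrow> (\<exists>x. (\<exists>v\<in>V. x v \<noteq> 0) \<and> (\<forall>v\<in>V. adj_mult V E x v = \<mu> * x v))"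
  unfolding adj_eigenvalue_def adj_mult_def ..

lemma inner_on_commute: "inner_on V x y = inner_on V y x"
  unfolding inner_on_def by (simp add: mult.commute)

lemma inner_on_add_scaled_left:
  "inner_on V (\<lambda>v. x v + t * y v) z = inner_on V x z + t * inner_on V y z"
  unfolding inner_on_def by (simp add: sum.distrib sum_distrib_left algebra_simps)

lemma inner_on_add_scaled_right:
  "inner_on V z (\<lambda>v. x v + t * y v) = inner_on V z x + t * inner_on V z y"
  using inner_on_add_scaled_left inner_on_commute by metis

lemma inner_on_scale:
  "inner_on V (\<lambda>v. c * x v) (\<lambda>v. d * y v) = c * d * inner_on V x y"
  unfolding inner_on_def by (simp add: sum_distrib_left algebra_simps)

lemma inner_on_sum_right:
  "inner_on V w (\<lambda>u. \<Sum>i\<in>M. c i * f i u) = (\<Sum>i\<in>M. c i * inner_on V w (f i))"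
  unfolding inner_on_def sum_distrib_left by (subst sum.swap) (simp add: algebra_simps)

lemma inner_on_cong:
  "(\<And>v. v \<in> V \<Longrightarrow> x v = x' v) \<Longrightarrow> (\<And>v. v \<in> V \<Longrightarrow> y v = y' v) \<Longrightarrow>
    inner_on V x y = inner_on V x' y'"
  unfolding inner_on_def by (intro sum.cong) auto

lemma inner_on_indicator:
  assumes "finite V" "v \<in> V"
  shows "inner_on V (\<lambda>u. if u = v then 1 else 0) y = y v"
  unfolding inner_on_def using assms by (simp add: if_distrib[of "\<lambda>c. c * _"] cong: if_cong)

lemma inner_on_self_nonneg: "0 \<le> inner_on V x x"
  unfolding inner_on_def by (intro sum_nonneg) simp

lemma inner_on_self_eq_0_iff:
  assumes "finite V"
  shows "inner_on V x x = 0 \<longleftrightarrow> (\<forall>v\<in>V. x v = 0)"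
  unfolding inner_on_def by (simp add: sum_nonneg_eq_0_iff[OF assms])

lemma inner_on_self_pos_iff:
  assumes "finite V"
  shows "0 < inner_on V x x \<longleftrightarrow> (\<exists>v\<in>V. x v \<noteq> 0)"
  by (simp add: less_le inner_on_self_nonneg inner_on_self_eq_0_iff[OF assms])

lemma adj_mult_add_scaled:
  "adj_mult V E (\<lambda>v. x v + t * y v) w = adj_mult V E x w + t * adj_mult V E y w"
  unfolding adj_mult_def by (simp add: sum.distrib sum_distrib_left)

lemma adj_mult_scale: "adj_mult V E (\<lambda>v. c * x v) w = c * adj_mult V E x w"
  unfolding adj_mult_def by (simp add: sum_distrib_left)

lemma adj_form_add_scaled_left:
  "adj_form V E (\<lambda>v. x v + t * y v) z = adj_form V E x z + t * adj_form V E y z"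
  unfolding adj_form_def by (rule inner_on_add_scaled_left)

lemma adj_form_add_scaled_right:
  "adj_form V E z (\<lambda>v. x v + t * y v) = adj_form V E z x + t * adj_form V E z y"
  unfolding adj_form_def adj_mult_add_scaled by (rule inner_on_add_scaled_right)

lemma adj_form_scale:
  "adj_form V E (\<lambda>v. c * x v) (\<lambda>v. d * y v) = c * d * adj_form V E x y"
  unfolding adj_form_def adj_mult_scale by (rule inner_on_scale)

lemma adj_form_cong:
  "(\<And>v. v \<in> V \<Longrightarrow> x v = x' v) \<Longrightarrow> (\<And>v. v \<in> V \<Longrightarrow> y v = y' v) \<Longrightarrow>
    adj_form V E x y = adj_form V E x' y'"
  unfolding adj_form_def adj_mult_def by (intro inner_on_cong sum.cong) auto

lemma adj_form_expand:
  assumes "finite V"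
  shows "adj_form V E x y = (\<Sum>v\<in>V. \<Sum>u\<in>V. if E v u then x v * y u else 0)"
proof -
  have "adj_form V E x y = (\<Sum>v\<in>V. x v * (\<Sum>u\<in>V. if E v u then y u else 0))"
    unfolding adj_form_def inner_on_def adj_mult_def using assms by (simp add: sum.inter_filter)
  then show ?thesis by (auto simp: sum_distrib_left intro!: sum.cong)
qed

lemma adj_form_commute:
  assumes "finite V" "\<forall>u w. E u w \<longrightarrow> E w u"
  shows "adj_form V E x y = adj_form V E y x"
  unfolding adj_form_expand[OF assms(1)] using assms(2)
  by (subst sum.swap) (intro sum.cong refl, auto simp: mult.commute)

lemma adj_form_eigenvector:
  assumes "\<forall>v\<in>V. adj_mult V E y v = \<mu> * y v"
  shows "adj_form V E x y = \<mu> * inner_on V x y"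
proof -
  have "adj_form V E x y = inner_on V x (\<lambda>v. \<mu> * y v)"
    unfolding adj_form_def using assms by (intro inner_on_cong) simp_all
  also have "\<dots> = \<mu> * inner_on V x y"
    using inner_on_scale[of V 1 x \<mu> y] by simp
  finally show ?thesis .
qed

section \<open>The Rayleigh principle\<close>

lemma linear_coeff_zero_if_quadratic_nonpos:
  fixes a c :: real
  assumes "0 \<le> a" and nonpos: "\<And>t. 2 * t * a + t\<^sup>2 * c \<le> 0"
  shows "a = 0"
proof (rule ccontr)
  assume "a \<noteq> 0"
  with assms(1) have "0 < a" by simp
  define s where "s = \<bar>c\<bar> + 1"
  have "0 < s" and "0 < c + 2 * s" unfolding s_def by (auto simp: abs_if)
  have "2 * (a / s) * a + (a / s)\<^sup>2 * c = a\<^sup>2 * (c + 2 * s) / s\<^sup>2"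
    using \<open>0 < s\<close> by (simp add: field_simps power2_eq_square)
  also have "\<dots> > 0"
    using \<open>0 < a\<close> \<open>0 < s\<close> \<open>0 < c + 2 * s\<close> by simp
  finally show False using nonpos[of "a / s"] by linarith
qed

text \<open>Coordinates outside V are pinned to 0, which makes the sphere compact in the product
  topology on \<^typ>\<open>'a \<Rightarrow> real\<close>.\<close>

definition unit_sphere_on :: "'a set \<Rightarrow> ('a \<Rightarrow> real) set" where
  "unit_sphere_on V = {x. (\<forall>v. v \<notin> V \<longrightarrow> x v = 0) \<and> inner_on V x x = 1}"

lemma unit_sphere_on_coordinate_bound:
  assumes "finite V" "x \<in> unit_sphere_on V"
  shows "\<bar>x v\<bar> \<le> 1"
proof (cases "v \<in> V")
  case True
  have "x v * x v \<le> inner_on V x x"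
    unfolding inner_on_def by (rule member_le_sum[OF True _ assms(1)]) simp
  with assms(2) show ?thesis
    unfolding unit_sphere_on_def abs_square_le_1[symmetric] by (simp add: power2_eq_square)
qed (use assms(2) in \<open>simp add: unit_sphere_on_def\<close>)

lemma compact_unit_sphere_on:
  assumes "finite V"
  shows "compact (unit_sphere_on V)"
proof -
  define S :: "'a \<Rightarrow> real set" where "S v = (if v \<in> V then {-1..1} else {0})" for v
  have "unit_sphere_on V = PiE UNIV S \<inter> (\<lambda>x. inner_on V x x) -` {1}"
  proof (intro equalityI subsetI)
    fix x assume x: "x \<in> unit_sphere_on V"
    have "x v \<in> S v" for v
      using unit_sphere_on_coordinate_bound[OF assms x, of v] x
      by (auto simp: S_def unit_sphere_on_def abs_le_iff)
    with x show "x \<in> PiE UNIV S \<inter> (\<lambda>x. inner_on V x x) -` {1}"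
      by (simp add: PiE_iff unit_sphere_on_def)
  next
    fix x assume "x \<in> PiE UNIV S \<inter> (\<lambda>x. inner_on V x x) -` {1}"
    then show "x \<in> unit_sphere_on V"
      by (auto simp: PiE_iff S_def unit_sphere_on_def split: if_splits)
  qed
  moreover have "compact (PiE UNIV S)"
    using compactin_PiE[of "\<lambda>_. euclidean" UNIV S]
    by (auto simp: S_def euclidean_product_topology)
  moreover have "closed ((\<lambda>x. inner_on V x x) -` {1})"
    unfolding inner_on_def
    by (intro closed_vimage closed_singleton continuous_intros continuous_on_product_coordinates)
  ultimately show ?thesis by (simp add: compact_Int_closed)
qed

definition normalize_on :: "'a set \<Rightarrow> ('a \<Rightarrow> real) \<Rightarrow> 'a \<Rightarrow> real" where
  "normalize_on V z v = (if v \<in> V then z v / sqrt (inner_on V z z) else 0)"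

lemma normalize_on_scaled:
  "v \<in> V \<Longrightarrow> normalize_on V z v = (1 / sqrt (inner_on V z z)) * z v"
  unfolding normalize_on_def by simp

lemma normalize_on_in_unit_sphere_on:
  assumes "0 < inner_on V z z"
  shows "normalize_on V z \<in> unit_sphere_on V"
proof -
  let ?c = "1 / sqrt (inner_on V z z)"
  have "inner_on V (normalize_on V z) (normalize_on V z) = inner_on V (\<lambda>v. ?c * z v) (\<lambda>v. ?c * z v)"
    by (intro inner_on_cong normalize_on_scaled)
  also have "\<dots> = 1"
    unfolding inner_on_scale using assms by simp
  finally show ?thesis by (simp add: unit_sphere_on_def normalize_on_def)
qed

lemma adj_form_normalize_on:
  assumes "0 < inner_on V z z"
  shows "adj_form V E (normalize_on V z) (normalize_on V z) * inner_on V z z = adj_form V E z z"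
proof -
  let ?c = "1 / sqrt (inner_on V z z)"
  have "adj_form V E (normalize_on V z) (normalize_on V z) = adj_form V E (\<lambda>v. ?c * z v) (\<lambda>v. ?c * z v)"
    by (intro adj_form_cong normalize_on_scaled)
  then show ?thesis
    unfolding adj_form_scale using assms by simp
qed

lemma adj_form_attains_max_on_sphere:
  assumes "finite V" "V \<noteq> {}"
  obtains x where "inner_on V x x = 1"
    and "\<And>z. adj_form V E z z \<le> adj_form V E x x * inner_on V z z"
proof -
  have "continuous_on UNIV (\<lambda>x. adj_form V E x x)"
    unfolding adj_form_def inner_on_def adj_mult_def
    by (intro continuous_intros continuous_on_product_coordinates)
  then have cont: "continuous_on (unit_sphere_on V) (\<lambda>x. adj_form V E x x)"
    by (rule continuous_on_subset) simp
  have "unit_sphere_on V \<noteq> {}"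
    using normalize_on_in_unit_sphere_on[of V "\<lambda>_. 1"] assms
    by (auto simp: inner_on_self_pos_iff)
  then obtain x where "x \<in> unit_sphere_on V"
    and max: "\<And>y. y \<in> unit_sphere_on V \<Longrightarrow> adj_form V E y y \<le> adj_form V E x x"
    using continuous_attains_sup[OF compact_unit_sphere_on[OF assms(1)] _ cont] by blast
  show thesis
  proof
    show "inner_on V x x = 1" using \<open>x \<in> unit_sphere_on V\<close> by (simp add: unit_sphere_on_def)
    fix z
    show "adj_form V E z z \<le> adj_form V E x x * inner_on V z z"
    proof (cases "inner_on V z z = 0")
      case True
      then have "adj_form V E z z = adj_form V E (\<lambda>_. 0) (\<lambda>_. 0)"
        by (intro adj_form_cong) (simp_all add: inner_on_self_eq_0_iff assms(1))
      with True show ?thesis by (simp add: adj_form_def inner_on_def)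
    next
      case False
      then have pos: "0 < inner_on V z z" using inner_on_self_nonneg[of V z] by linarith
      have "adj_form V E z z
          = adj_form V E (normalize_on V z) (normalize_on V z) * inner_on V z z"
        using adj_form_normalize_on[OF pos] by simp
      also have "\<dots> \<le> adj_form V E x x * inner_on V z z"
        using max[OF normalize_on_in_unit_sphere_on[OF pos]] pos by (intro mult_right_mono) auto
      finally show ?thesis .
    qed
  qed
qed

text \<open>First variation along the residual r = Ax - \<mu>x: the linear coefficient of the quadratic
  t \<mapsto> y\<cdot>Ay - \<mu> y\<cdot>y at y = x + t r is 2 r\<cdot>r, which must vanish at a maximiser.\<close>

lemma maximizer_is_adj_eigenvector:
  assumes fin: "finite V" and sym: "\<forall>u w. E u w \<longrightarrow> E w u"
    and unit: "inner_on V x x = 1"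
    and max: "\<And>z. adj_form V E z z \<le> adj_form V E x x * inner_on V z z"
  shows "\<forall>v\<in>V. adj_mult V E x v = adj_form V E x x * x v"
proof -
  define \<mu> where "\<mu> = adj_form V E x x"
  define r where "r = (\<lambda>v. adj_mult V E x v + (- \<mu>) * x v)"
  have r_r: "inner_on V r r = adj_form V E r x - \<mu> * inner_on V r x"
    using inner_on_add_scaled_right[of V r "adj_mult V E x" "- \<mu>" x]
    unfolding r_def[symmetric] adj_form_def by simp
  have "2 * t * inner_on V r r + t\<^sup>2 * (adj_form V E r r - \<mu> * inner_on V r r) \<le> 0" for t
  proof -
    define z where "z = (\<lambda>v. x v + t * r v)"
    have adj_z: "adj_form V E z z = \<mu> + 2 * t * adj_form V E r x + t\<^sup>2 * adj_form V E r r"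
      using adj_form_commute[OF fin sym, of x r]
      by (simp add: z_def adj_form_add_scaled_left adj_form_add_scaled_right \<mu>_def
          power2_eq_square algebra_simps)
    have inner_z: "inner_on V z z = 1 + 2 * t * inner_on V r x + t\<^sup>2 * inner_on V r r"
      using inner_on_commute[of V x r] unit
      by (simp add: z_def inner_on_add_scaled_left inner_on_add_scaled_right
          power2_eq_square algebra_simps)
    have "2 * t * inner_on V r r + t\<^sup>2 * (adj_form V E r r - \<mu> * inner_on V r r)
        = adj_form V E z z - \<mu> * inner_on V z z"
      unfolding adj_z inner_z r_r by (simp add: algebra_simps)
    with max[of z] show ?thesis by (simp add: \<mu>_def)
  qed
  then have "inner_on V r r = 0"
    by (rule linear_coeff_zero_if_quadratic_nonpos[OF inner_on_self_nonneg])
  then show ?thesis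
    by (simp add: inner_on_self_eq_0_iff[OF fin] r_def \<mu>_def)
qed

lemma ex_adj_eigenvalue_dominating_form:
  assumes "finite V" "\<forall>u w. E u w \<longrightarrow> E w u" "V \<noteq> {}"
  obtains \<mu> where "adj_eigenvalue V E \<mu>"
    and "\<And>z. adj_form V E z z \<le> \<mu> * inner_on V z z"
proof -
  obtain x where unit: "inner_on V x x = 1"
    and max: "\<And>z. adj_form V E z z \<le> adj_form V E x x * inner_on V z z"
    using adj_form_attains_max_on_sphere[OF assms(1,3)] by blast
  have "\<exists>v\<in>V. x v \<noteq> 0"
    using unit inner_on_self_pos_iff[OF assms(1), of x] by simp
  with maximizer_is_adj_eigenvector[OF assms(1,2) unit max]
  have "adj_eigenvalue V E (adj_form V E x x)"
    unfolding adj_eigenvalue_iff by blast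
  then show thesis using max by (rule that)
qed

lemma adj_eigenvectors_orthogonal:
  assumes "finite V" "\<forall>u w. E u w \<longrightarrow> E w u"
    and "\<forall>v\<in>V. adj_mult V E x v = \<mu> * x v" "\<forall>v\<in>V. adj_mult V E y v = \<nu> * y v"
    and "\<mu> \<noteq> \<nu>"
  shows "inner_on V x y = 0"
proof -
  have "\<nu> * inner_on V x y = \<mu> * inner_on V x y"
    using adj_form_eigenvector[OF assms(3), of y] adj_form_eigenvector[OF assms(4), of x]
      adj_form_commute[OF assms(1,2), of x y] inner_on_commute[of V x y]
    by auto
  with assms(5) show ?thesis by simp
qed

lemma bessel_inequality_on:
  assumes "finite M"
    and orth: "\<And>i j. i \<in> M \<Longrightarrow> j \<in> M \<Longrightarrow> inner_on V (e i) (e j) = (if i = j then 1 else 0)"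
  shows "(\<Sum>i\<in>M. (inner_on V w (e i))\<^sup>2) \<le> inner_on V w w"
proof -
  define c where "c i = inner_on V w (e i)" for i
  define p where "p = (\<lambda>u. \<Sum>i\<in>M. c i * e i u)"
  have e_p: "inner_on V (e i) p = c i" if "i \<in> M" for i
  proof -
    have "inner_on V (e i) p = (\<Sum>j\<in>M. c j * inner_on V (e i) (e j))"
      unfolding p_def inner_on_sum_right ..
    also have "\<dots> = (\<Sum>j\<in>M. if j = i then c j else 0)"
      using that orth by (intro sum.cong) auto
    finally show ?thesis using assms(1) that by simp
  qed
  have w_p: "inner_on V w p = (\<Sum>i\<in>M. (c i)\<^sup>2)"
    unfolding p_def inner_on_sum_right c_def power2_eq_square ..
  have "inner_on V p p = (\<Sum>i\<in>M. c i * inner_on V p (e i))"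
    by (subst (2) p_def) (rule inner_on_sum_right)
  also have "\<dots> = (\<Sum>i\<in>M. (c i)\<^sup>2)"
    using e_p by (intro sum.cong) (simp_all add: inner_on_commute power2_eq_square)
  finally have p_p: "inner_on V p p = (\<Sum>i\<in>M. (c i)\<^sup>2)" .
  have "0 \<le> inner_on V (\<lambda>u. w u + (-1) * p u) (\<lambda>u. w u + (-1) * p u)"
    by (rule inner_on_self_nonneg)
  also have "\<dots> = inner_on V w w - 2 * inner_on V w p + inner_on V p p"
    unfolding inner_on_add_scaled_left inner_on_add_scaled_right
    using inner_on_commute[of V p w] by simp
  finally show ?thesis unfolding w_p p_p c_def by simp
qed

lemma adj_eigenvalue_unit_eigenvector:
  assumes "finite V" "adj_eigenvalue V E \<mu>"
  obtains e where "inner_on V e e = 1" "\<forall>v\<in>V. adj_mult V E e v = \<mu> * e v"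
proof -
  obtain x where "0 < inner_on V x x" and eigen: "\<forall>v\<in>V. adj_mult V E x v = \<mu> * x v"
    using assms unfolding adj_eigenvalue_iff inner_on_self_pos_iff[OF assms(1)] by blast
  define c where "c = 1 / sqrt (inner_on V x x)"
  show thesis
  proof
    show "inner_on V (\<lambda>v. c * x v) (\<lambda>v. c * x v) = 1"
      unfolding inner_on_scale c_def using \<open>0 < inner_on V x x\<close> by simp
    show "\<forall>v\<in>V. adj_mult V E (\<lambda>v. c * x v) v = \<mu> * (c * x v)"
      unfolding adj_mult_scale using eigen by simp
  qed
qed

text \<open>Unit eigenvectors for distinct eigenvalues are orthonormal, and by Bessel's inequality
  each vertex contributes at most 1 to the sum of their squared norms. Hence the maximum in
  \<^const>\<open>lambda1\<close> is taken over a finite set.\<close>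

lemma card_adj_eigenvalues_le:
  assumes fin: "finite V" and sym: "\<forall>u w. E u w \<longrightarrow> E w u"
    and "finite M" and "M \<subseteq> {\<mu>. adj_eigenvalue V E \<mu>}"
  shows "card M \<le> card V"
proof -
  have "\<forall>\<mu>\<in>M. \<exists>e. inner_on V e e = 1 \<and> (\<forall>v\<in>V. adj_mult V E e v = \<mu> * e v)"
    using assms(4) adj_eigenvalue_unit_eigenvector[OF fin] by blast
  then obtain e where unit: "\<And>\<mu>. \<mu> \<in> M \<Longrightarrow> inner_on V (e \<mu>) (e \<mu>) = 1"
    and e_eigen: "\<And>\<mu>. \<mu> \<in> M \<Longrightarrow> \<forall>v\<in>V. adj_mult V E (e \<mu>) v = \<mu> * e \<mu> v"
    by metis
  have orthonormal:
    "inner_on V (e \<mu>) (e \<nu>) = (if \<mu> = \<nu> then 1 else 0)" if "\<mu> \<in> M" "\<nu> \<in> M" for \<mu> \<nu>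
    using adj_eigenvectors_orthogonal[OF fin sym e_eigen[OF that(1)] e_eigen[OF that(2)]]
      unit[OF that(1)] by auto
  have coordinates: "(\<Sum>\<mu>\<in>M. (e \<mu> v)\<^sup>2) \<le> 1" if "v \<in> V" for v
    using bessel_inequality_on[OF \<open>finite M\<close> orthonormal, of "\<lambda>u. if u = v then 1 else 0"]
    by (simp add: inner_on_indicator[OF fin that])
  have "real (card M) = (\<Sum>\<mu>\<in>M. inner_on V (e \<mu>) (e \<mu>))"
    using unit by simp
  also have "\<dots> = (\<Sum>v\<in>V. \<Sum>\<mu>\<in>M. (e \<mu> v)\<^sup>2)"
    unfolding inner_on_def by (subst sum.swap) (simp add: power2_eq_square)
  also have "\<dots> \<le> real (card V)"
    using sum_mono[OF coordinates] by simp
  finally show ?thesis by simp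
qed

lemma finite_adj_eigenvalues:
  assumes "finite V" "\<forall>u w. E u w \<longrightarrow> E w u"
  shows "finite {\<mu>. adj_eigenvalue V E \<mu>}"
proof (rule ccontr)
  assume "infinite {\<mu>. adj_eigenvalue V E \<mu>}"
  then obtain M where "finite M" "card M = Suc (card V)" "M \<subseteq> {\<mu>. adj_eigenvalue V E \<mu>}"
    using infinite_arbitrarily_large by blast
  with card_adj_eigenvalues_le[OF assms] show False by fastforce
qed

lemma adj_form_le_lambda1:
  assumes "finite V" "\<forall>u w. E u w \<longrightarrow> E w u"
  shows "adj_form V E y y \<le> lambda1 V E * inner_on V y y"
proof (cases "V = {}")
  case True
  then show ?thesis by (simp add: adj_form_def inner_on_def)
next
  case False
  then obtain \<mu> where "adj_eigenvalue V E \<mu>" and bound: "adj_form V E y y \<le> \<mu> * inner_on V y y"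
    using ex_adj_eigenvalue_dominating_form[OF assms] by metis
  then have "\<mu> \<le> lambda1 V E"
    unfolding lambda1_def using finite_adj_eigenvalues[OF assms] by (intro Max_ge) auto
  then have "\<mu> * inner_on V y y \<le> lambda1 V E * inner_on V y y"
    by (intro mult_right_mono inner_on_self_nonneg)
  with bound show ?thesis by linarith
qed

lemma lambda1_nonneg:
  assumes "simple_graph V E" "V \<noteq> {}"
  shows "0 \<le> lambda1 V E"
proof -
  have fin: "finite V" and sym: "\<forall>u w. E u w \<longrightarrow> E w u" and loopless: "\<forall>u. \<not> E u u"
    using assms(1) unfolding simple_graph_def by blast+
  obtain v where "v \<in> V" using assms(2) by blast
  define \<delta> where "\<delta> = (\<lambda>u. if u = v then 1 else 0 :: real)"
  have "adj_form V E \<delta> \<delta> = 0"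
    using loopless unfolding adj_form_def \<delta>_def inner_on_indicator[OF fin \<open>v \<in> V\<close>]
    by (auto simp: adj_mult_def intro!: sum.neutral)
  moreover have "inner_on V \<delta> \<delta> = 1"
    unfolding \<delta>_def inner_on_indicator[OF fin \<open>v \<in> V\<close>] by simp
  ultimately show ?thesis
    using adj_form_le_lambda1[OF fin sym, of \<delta>] by simp
qed

section \<open>Test vectors constant on the two sides of a cut\<close>

lemma adj_form_ge_cut:
  assumes fin: "finite V" and sym: "\<forall>u w. E u w \<longrightarrow> E w u"
    and "X \<subseteq> V" "Y \<subseteq> V" "X \<inter> Y = {}" and nonneg: "\<forall>v\<in>V. 0 \<le> y v"
  shows "2 * (\<Sum>x\<in>X. \<Sum>w\<in>Y. if E x w then y x * y w else 0) \<le> adj_form V E y y"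
proof -
  define f where "f v u = (if E v u then y v * y u else 0)" for v u
  have f_nonneg: "0 \<le> f v u" if "v \<in> V" "u \<in> V" for v u
    using that nonneg by (simp add: f_def)
  have finXY: "finite X" "finite Y" using assms(3,4) fin by (auto intro: finite_subset)
  have "(\<Sum>v\<in>Y. \<Sum>u\<in>X. f v u) = (\<Sum>x\<in>X. \<Sum>w\<in>Y. f x w)"
    using sym by (subst sum.swap) (intro sum.cong refl, auto simp: f_def mult.commute)
  then have "2 * (\<Sum>x\<in>X. \<Sum>w\<in>Y. f x w) = (\<Sum>v\<in>X. \<Sum>u\<in>Y. f v u) + (\<Sum>v\<in>Y. \<Sum>u\<in>X. f v u)"
    by simp
  also have "\<dots> \<le> (\<Sum>v\<in>X. \<Sum>u\<in>V. f v u) + (\<Sum>v\<in>Y. \<Sum>u\<in>V. f v u)"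
    using assms(3,4) fin f_nonneg by (intro add_mono sum_mono sum_mono2) auto
  also have "\<dots> = (\<Sum>v\<in>X \<union> Y. \<Sum>u\<in>V. f v u)"
    using finXY assms(5) by (simp add: sum.union_disjoint)
  also have "\<dots> \<le> (\<Sum>v\<in>V. \<Sum>u\<in>V. f v u)"
    using assms(3,4) fin f_nonneg by (intro sum_mono2 sum_nonneg) auto
  finally show ?thesis
    unfolding adj_form_expand[OF fin] f_def .
qed

lemma adj_form_two_valued_ge:
  fixes p q :: real
  assumes fin: "finite V" and sym: "\<forall>u w. E u w \<longrightarrow> E w u"
    and "X \<subseteq> V" "0 \<le> p" "0 \<le> q"
  defines "y \<equiv> \<lambda>u. if u \<in> X then p else q"
  shows "2 * p * q * (\<Sum>x\<in>X. real (card {w\<in>V - X. E x w})) \<le> adj_form V E y y"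
proof -
  have "(\<Sum>w\<in>V - X. if E x w then y x * y w else 0) = p * q * card {w\<in>V - X. E x w}"
    if "x \<in> X" for x
  proof -
    have "(\<Sum>w\<in>V - X. if E x w then y x * y w else 0) = (\<Sum>w\<in>V - X. if E x w then p * q else 0)"
      using that by (intro sum.cong) (auto simp: y_def)
    also have "\<dots> = (\<Sum>w\<in>{w\<in>V - X. E x w}. p * q)"
      using fin by (intro sum.inter_filter[symmetric]) simp
    finally show ?thesis by simp
  qed
  then have "(\<Sum>x\<in>X. \<Sum>w\<in>V - X. if E x w then y x * y w else 0)
      = p * q * (\<Sum>x\<in>X. real (card {w\<in>V - X. E x w}))"
    unfolding sum_distrib_left by simp
  moreover have "\<forall>v\<in>V. 0 \<le> y v" using assms(4,5) by (simp add: y_def)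
  then have "2 * (\<Sum>x\<in>X. \<Sum>w\<in>V - X. if E x w then y x * y w else 0) \<le> adj_form V E y y"
    using adj_form_ge_cut[OF fin sym \<open>X \<subseteq> V\<close>, of "V - X"] by blast
  ultimately show ?thesis by simp
qed

lemma inner_on_two_valued:
  fixes p q :: real
  assumes "finite V" "X \<subseteq> V"
  defines "y \<equiv> \<lambda>u. if u \<in> X then p else q"
  shows "inner_on V y y = card X * p\<^sup>2 + card (V - X) * q\<^sup>2"
proof -
  have "V = X \<union> (V - X)" using assms(2) by blast
  then have "inner_on V y y = (\<Sum>v\<in>X. y v * y v) + (\<Sum>v\<in>V - X. y v * y v)"
    unfolding inner_on_def using assms(1,2) by (metis Diff_disjoint finite_Diff finite_subset sum.union_disjoint)
  also have "\<dots> = (\<Sum>v\<in>X. p\<^sup>2) + (\<Sum>v\<in>V - X. q\<^sup>2)"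
    by (intro arg_cong2[where f = "(+)"] sum.cong) (auto simp: y_def power2_eq_square)
  finally show ?thesis by simp
qed

lemma lambda1_ge_cut_degree:
  assumes fin: "finite V" and sym: "\<forall>u w. E u w \<longrightarrow> E w u"
    and "X \<subseteq> V" "X \<noteq> {}" "0 < d" and degree: "\<forall>x\<in>X. d \<le> card {w\<in>V - X. E x w}"
  shows "real d * sqrt (card X) \<le> lambda1 V E * sqrt (card (V - X))"
proof -
  define a where "a = card X"
  define b where "b = card (V - X)"
  obtain x0 where "x0 \<in> X" using \<open>X \<noteq> {}\<close> by blast
  with degree \<open>0 < d\<close> have "0 < card {w\<in>V - X. E x0 w}"
    using order_less_le_trans by blast
  then have "{w\<in>V - X. E x0 w} \<noteq> {}" using card_gt_0_iff by blast
  then have "0 < a" "0 < b"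
    using \<open>X \<subseteq> V\<close> \<open>X \<noteq> {}\<close> fin unfolding a_def b_def by (auto simp: card_gt_0_iff finite_subset)
  define sa where "sa = sqrt a"
  define sb where "sb = sqrt b"
  have "0 < sa" "0 < sb" "sa\<^sup>2 = a" "sb\<^sup>2 = b"
    using \<open>0 < a\<close> \<open>0 < b\<close> unfolding sa_def sb_def by simp_all
  define e where "e = (\<Sum>x\<in>X. real (card {w\<in>V - X. E x w}))"
  have "real a * d \<le> e"
    using sum_mono[of X "\<lambda>_. real d" "\<lambda>x. real (card {w\<in>V - X. E x w})"] degree
    unfolding e_def a_def by simp
  let ?y = "\<lambda>u. if u \<in> X then sb else sa"
  have "(2 * a * sb) * (d * sa) = 2 * sb * sa * (a * d)"
    by (simp add: algebra_simps)
  also have "\<dots> \<le> 2 * sb * sa * e"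
    using \<open>real a * d \<le> e\<close> \<open>0 < sa\<close> \<open>0 < sb\<close> by simp
  also have "\<dots> \<le> adj_form V E ?y ?y"
    unfolding e_def using adj_form_two_valued_ge[OF fin sym \<open>X \<subseteq> V\<close>] \<open>0 < sa\<close> \<open>0 < sb\<close> by simp
  also have "\<dots> \<le> lambda1 V E * (a * sb\<^sup>2 + b * sa\<^sup>2)"
    using adj_form_le_lambda1[OF fin sym, of ?y] inner_on_two_valued[OF fin \<open>X \<subseteq> V\<close>]
    unfolding a_def b_def by simp
  also have "\<dots> = (2 * a * sb) * (lambda1 V E * sb)"
    unfolding \<open>sa\<^sup>2 = a\<close> by (simp add: \<open>sb\<^sup>2 = b\<close>[symmetric] power2_eq_square algebra_simps)
  finally have "(2 * a * sb) * (d * sa) \<le> (2 * a * sb) * (lambda1 V E * sb)" .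
  then have "d * sa \<le> lambda1 V E * sb"
    by (rule mult_left_le_imp_le) (use \<open>0 < a\<close> \<open>0 < sb\<close> in simp)
  then show ?thesis unfolding sa_def sb_def a_def b_def .
qed

section \<open>Atoms\<close>

lemma atom_order_pos: "atom k V E \<Longrightarrow> 1 \<le> k"
  by (cases rule: atom.cases) auto

lemma atom_order_le_card:
  assumes "atom k V E" "finite V"
  shows "k \<le> card V"
  using assms
proof (induction rule: atom.induct)
  case (K1 E v)
  then show ?case by simp
next
  case (step I B V E k)
  then have "finite I" "finite B" by auto
  have "k \<le> card B" using step.IH[OF \<open>finite B\<close>] .
  moreover from step.hyps(4) have "1 \<le> k" by (rule atom_order_pos)
  ultimately obtain b where "b \<in> B" by fastforce
  with step.hyps(5) have "card {i\<in>I. E b i} = 1" by blast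
  then have "{i\<in>I. E b i} \<noteq> {}" by (metis card.empty zero_neq_one)
  then have "1 \<le> card I" using \<open>finite I\<close> by (auto simp: Suc_le_eq card_gt_0_iff)
  moreover have "card V = card I + card B"
    using card_Un_disjoint[OF \<open>finite I\<close> \<open>finite B\<close> step.hyps(1)] step.hyps(2) by simp
  ultimately show ?case using \<open>k \<le> card B\<close> by linarith
qed

lemma atom_outer_neighbours:
  assumes "atom k V E" "finite V" "1 \<le> m" "m \<le> k"
  shows "\<exists>X\<subseteq>V. m \<le> card X \<and> (\<forall>x\<in>X. k - m \<le> card {w\<in>V - X. E x w})"
  using assms
proof (induction arbitrary: m rule: atom.induct)
  case (K1 E v)
  then show ?case by (intro exI[of _ "{v}"]) simp
next
  case (step I B V E k)
  have "finite I" "finite B" using step.hyps(2) step.prems(1) by auto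
  show ?case
  proof (cases "m = Suc k")
    case True
    have "Suc k \<le> card V" using atom.step[OF step.hyps] step.prems(1) by (rule atom_order_le_card)
    with True show ?thesis by (intro exI[of _ V]) auto
  next
    case False
    with step.prems(3) have "m \<le> k" by simp
    then obtain X where X: "X \<subseteq> B" "m \<le> card X"
      and degree: "\<forall>x\<in>X. k - m \<le> card {w\<in>B - X. induced E B x w}"
      using step.IH[OF \<open>finite B\<close> step.prems(2)] by blast
    have "Suc k - m \<le> card {w\<in>V - X. E x w}" if "x \<in> X" for x
    proof -
      let ?inner = "{w\<in>B - X. induced E B x w}" and ?outer = "{i\<in>I. E x i}"
      have "card (?inner \<union> ?outer) = card ?inner + card ?outer"
        using step.hyps(1) \<open>finite I\<close> \<open>finite B\<close> by (intro card_Un_disjoint) auto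
      moreover have "card (?inner \<union> ?outer) \<le> card {w\<in>V - X. E x w}"
        using step.hyps(1,2) step.prems(1) X(1) unfolding induced_def by (intro card_mono) auto
      moreover have "card ?outer = 1" using step.hyps(5) X(1) that by blast
      moreover have "k - m \<le> card ?inner" using degree that by blast
      ultimately show ?thesis using \<open>m \<le> k\<close> by linarith
    qed
    moreover have "X \<subseteq> V" using X(1) step.hyps(2) by blast
    ultimately show ?thesis using X(2) by blast
  qed
qed

lemma half_split_sqrt_bound:
  assumes "2 \<le> k"
  shows "real k * sqrt (real k) / 4 \<le> real (k - k div 2) * sqrt (real (k div 2))"
proof -
  have "real k / 2 \<le> real (k - k div 2)" by linarith
  moreover have "sqrt (real k) / 2 \<le> sqrt (real (k div 2))"
  proof -
    have "real k / 4 \<le> real (k div 2)" using assms by linarith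
    then have "sqrt (real k / 4) \<le> sqrt (real (k div 2))" by (rule real_sqrt_le_mono)
    then show ?thesis by (simp add: real_sqrt_divide)
  qed
  ultimately have "(real k / 2) * (sqrt (real k) / 2) \<le> real (k - k div 2) * sqrt (real (k div 2))"
    by (intro mult_mono) auto
  then show ?thesis by simp
qed

lemma atom_lambda1_ge:
  assumes "simple_graph V E" "atom k V E" "2 \<le> k"
  shows "real k * sqrt (real k) / 4 \<le> lambda1 V E * sqrt (card V)"
proof -
  have fin: "finite V" and sym: "\<forall>u w. E u w \<longrightarrow> E w u"
    using assms(1) unfolding simple_graph_def by blast+
  define m where "m = k div 2"
  have "1 \<le> m" "m \<le> k" using assms(3) unfolding m_def by auto
  then obtain X where "X \<subseteq> V" "m \<le> card X"
    and degree: "\<forall>x\<in>X. k - m \<le> card {w\<in>V - X. E x w}"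
    using atom_outer_neighbours[OF assms(2) fin] by blast
  have "X \<noteq> {}" "0 < k - m" using \<open>1 \<le> m\<close> \<open>m \<le> card X\<close> assms(3) unfolding m_def by auto
  with \<open>X \<subseteq> V\<close> have "0 \<le> lambda1 V E" using lambda1_nonneg[OF assms(1)] by blast
  have "real k * sqrt (real k) / 4 \<le> real (k - m) * sqrt (real m)"
    unfolding m_def using assms(3) by (rule half_split_sqrt_bound)
  also have "\<dots> \<le> real (k - m) * sqrt (card X)"
    using \<open>m \<le> card X\<close> by (intro mult_left_mono) auto
  also have "\<dots> \<le> lambda1 V E * sqrt (card (V - X))"
    by (rule lambda1_ge_cut_degree[OF fin sym \<open>X \<subseteq> V\<close> \<open>X \<noteq> {}\<close> \<open>0 < k - m\<close> degree])
  also have "\<dots> \<le> lambda1 V E * sqrt (card V)"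
    using fin \<open>0 \<le> lambda1 V E\<close> by (intro mult_left_mono) (auto intro: card_mono)
  finally show ?thesis .
qed

theorem lemma5:
  fixes V :: "'a set" and E :: "'a \<Rightarrow> 'a \<Rightarrow> bool" and k n :: nat
  assumes "k \<ge> 1"
    and "simple_graph V E"
    and "atom k V E"
    and "n = card V"
  shows "lambda1 V E \<ge> real k * sqrt (real k) / (4 * sqrt (real n)) - 2"
proof -
  have "finite V" using assms(2) by (simp add: simple_graph_def)
  then have "k \<le> n" using atom_order_le_card[OF assms(3)] assms(4) by simp
  with assms(1,4) have "V \<noteq> {}" "1 \<le> sqrt (real n)" by auto
  consider "k = 1" | "2 \<le> k" using assms(1) by linarith
  then show ?thesis
  proof cases
    case 1
    have "1 / (4 * sqrt (real n)) \<le> 1 / 4"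
      using \<open>1 \<le> sqrt (real n)\<close> by (intro divide_left_mono) auto
    with 1 lambda1_nonneg[OF assms(2) \<open>V \<noteq> {}\<close>] show ?thesis by simp
  next
    case 2
    with assms(2,3) have "real k * sqrt (real k) / 4 \<le> lambda1 V E * sqrt (real n)"
      unfolding assms(4) by (rule atom_lambda1_ge)
    then have "real k * sqrt (real k) / (4 * sqrt (real n)) \<le> lambda1 V E"
      using \<open>1 \<le> sqrt (real n)\<close> by (subst pos_divide_le_eq) (auto simp: algebra_simps)
    then show ?thesis by linarith
  qed
qed

end
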